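(* $F_v(K_{1,1,2},K_{1,2,2};4)\le 26$; that is, there exists a $K_4$-free graph $H$ on 26 vertices such that for every partition $V(H)=R\cup B$, the subgraph induced by $R$ contains $K_{1,1,2}$ or the subgraph induced by $B$ contains $K_{1,2,2}$.
   Context: All graphs are finite and simple. $K_{p,q,s}$ is the complete tripartite graph with parts of sizes $p,q,s$ (so $K_{1,1,2}$ is $K_4$ minus an edge). "Contains" means has a (not necessarily induced) subgraph isomorphic to. $F_v(H_1,H_2;k)$ is the minimum number of vertices of a $K_k$-free graph $G$ such that for every partition $V(G)=X_1\cup X_2$ there is $i$ with the subgraph induced by $X_i$ containing $H_i$. *)

theory Defs
  imports Main
begin

definition simple_graph :: "'a set \<Rightarrow> ('a \<Rightarrow> 'a \<Rightarrow> bool) \<Rightarrow> bool" where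
  "simple_graph V E \<longleftrightarrow> finite V \<and> (\<forall>u v. E u v \<longrightarrow> E v u) \<and> (\<forall>v. \<not> E v v)
     \<and> (\<forall>u v. E u v \<longrightarrow> u \<in> V \<and> v \<in> V)"

definition contains_on :: "('a \<Rightarrow> 'a \<Rightarrow> bool) \<Rightarrow> 'a set \<Rightarrow> 'b set \<Rightarrow> ('b \<Rightarrow> 'b \<Rightarrow> bool) \<Rightarrow> bool" where
  "contains_on E S HV HE \<longleftrightarrow>
     (\<exists>f. inj_on f HV \<and> f ` HV \<subseteq> S \<and> (\<forall>u\<in>HV. \<forall>v\<in>HV. HE u v \<longrightarrow> E (f u) (f v)))"

definition complete_V :: "nat \<Rightarrow> nat set" where
  "complete_V k = {0..<k}"
definition complete_E :: "nat \<Rightarrow> nat \<Rightarrow> bool" where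
  "complete_E u v \<longleftrightarrow> u \<noteq> v"

definition tri_part :: "nat \<Rightarrow> nat \<Rightarrow> nat \<Rightarrow> nat" where
  "tri_part p q i = (if i < p then 0 else if i < p + q then 1 else 2)"
definition tripartite_V :: "nat \<Rightarrow> nat \<Rightarrow> nat \<Rightarrow> nat set" where
  "tripartite_V p q s = {0..<p+q+s}"
definition tripartite_E :: "nat \<Rightarrow> nat \<Rightarrow> nat \<Rightarrow> nat \<Rightarrow> nat \<Rightarrow> bool" where
  "tripartite_E p q s u v \<longleftrightarrow> tri_part p q u \<noteq> tri_part p q v"

definition Kk_free :: "nat \<Rightarrow> 'a set \<Rightarrow> ('a \<Rightarrow> 'a \<Rightarrow> bool) \<Rightarrow> bool" where
  "Kk_free k V E \<longleftrightarrow> \<not> contains_on E V (complete_V k) complete_E"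

end

theory Submission
  imports Defs
begin

text \<open>The graph \<open>H\<close> is given by adjacency lists and both of its properties are checked by
  evaluation.  It is \<open>K\<^sub>4\<close>-free because for every edge \<open>ab\<close> with \<open>a < b\<close> the common neighbours
  of \<open>a\<close> and \<open>b\<close> above \<open>b\<close> are pairwise non-adjacent, while the two smallest vertices of a
  \<open>K\<^sub>4\<close> would form an edge violating this.  For the arrowing property, a binary decision tree
  branches on the colour of one vertex at each inner node; every leaf exhibits four red vertices
  spanning a \<open>K\<^sub>1\<^sub>,\<^sub>1\<^sub>,\<^sub>2\<close> or five blue vertices spanning a \<open>K\<^sub>1\<^sub>,\<^sub>2\<^sub>,\<^sub>2\<close>, all coloured on the path
  to that leaf.  Every red/blue partition follows some root-to-leaf path, so it is covered.\<close>

lemma contains_on_listI: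
  assumes "distinct xs" "set xs \<subseteq> S"
    and "\<And>i j. i < length xs \<Longrightarrow> j < length xs \<Longrightarrow> HE i j \<Longrightarrow> E (xs ! i) (xs ! j)"
  shows "contains_on E S {0..<length xs} HE"
  unfolding contains_on_def
proof (intro exI conjI ballI impI)
  show "inj_on ((!) xs) {0..<length xs}"
    using assms(1) by (simp add: inj_on_def nth_eq_iff_index_eq)
  show "(!) xs ` {0..<length xs} \<subseteq> S"
    using assms(2) by (auto dest: nth_mem)
qed (use assms(3) in auto)

lemma simple_graph_symp: "simple_graph V E \<Longrightarrow> symp E"
  by (simp add: simple_graph_def symp_def)

fun K112_witness :: "('a \<Rightarrow> 'a \<Rightarrow> bool) \<Rightarrow> 'a list \<Rightarrow> bool" where
  "K112_witness E [a, b, c, d] \<longleftrightarrow>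
     distinct [a, b, c, d] \<and> E a b \<and> E a c \<and> E a d \<and> E b c \<and> E b d"
| "K112_witness E _ \<longleftrightarrow> False"

fun K122_witness :: "('a \<Rightarrow> 'a \<Rightarrow> bool) \<Rightarrow> 'a list \<Rightarrow> bool" where
  "K122_witness E [a, b, c, d, e] \<longleftrightarrow> distinct [a, b, c, d, e] \<and>
     E a b \<and> E a c \<and> E a d \<and> E a e \<and> E b d \<and> E b e \<and> E c d \<and> E c e"
| "K122_witness E _ \<longleftrightarrow> False"

lemma contains_on_K112:
  assumes "symp E" "K112_witness E xs" "set xs \<subseteq> S"
  shows "contains_on E S (tripartite_V 1 1 2) (tripartite_E 1 1 2)"
proof -
  obtain a b c d where xs: "xs = [a, b, c, d]"
    using assms(2) by (cases "(E, xs)" rule: K112_witness.cases) auto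
  have edges: "E a b" "E a c" "E a d" "E b c" "E b d"
    using assms(2) by (simp_all add: xs)
  have "contains_on E S {0..<length xs} (tripartite_E 1 1 2)"
  proof (rule contains_on_listI)
    fix i j assume "i < length xs" "j < length xs" and ij: "tripartite_E 1 1 2 i j"
    then have "i \<in> {0, 1, 2, 3}" "j \<in> {0, 1, 2, 3}"
      by (auto simp: xs)
    then show "E (xs ! i) (xs ! j)"
      using ij edges edges[THEN sympD[OF assms(1)]]
      by (auto simp: xs tripartite_E_def tri_part_def)
  qed (use assms xs in auto)
  then show ?thesis
    by (simp add: xs tripartite_V_def)
qed

lemma contains_on_K122:
  assumes "symp E" "K122_witness E xs" "set xs \<subseteq> S"
  shows "contains_on E S (tripartite_V 1 2 2) (tripartite_E 1 2 2)"
proof -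
  obtain a b c d e where xs: "xs = [a, b, c, d, e]"
    using assms(2) by (cases "(E, xs)" rule: K122_witness.cases) auto
  have edges: "E a b" "E a c" "E a d" "E a e" "E b d" "E b e" "E c d" "E c e"
    using assms(2) by (simp_all add: xs)
  have "contains_on E S {0..<length xs} (tripartite_E 1 2 2)"
  proof (rule contains_on_listI)
    fix i j assume "i < length xs" "j < length xs" and ij: "tripartite_E 1 2 2 i j"
    then have "i \<in> {0, 1, 2, 3, 4}" "j \<in> {0, 1, 2, 3, 4}"
      by (auto simp: xs)
    then show "E (xs ! i) (xs ! j)"
      using ij edges edges[THEN sympD[OF assms(1)]]
      by (auto simp: xs tripartite_E_def tri_part_def)
  qed (use assms xs in auto)
  then show ?thesis
    by (simp add: xs tripartite_V_def)
qed

lemma set_K122_witness_subset: "simple_graph V E \<Longrightarrow> K122_witness E xs \<Longrightarrow> set xs \<subseteq> V"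
  by (cases "(E, xs)" rule: K122_witness.cases) (auto simp: simple_graph_def)

datatype 'a split_tree = Red "'a list" | Blue "'a list" | Split 'a "'a split_tree" "'a split_tree"

text \<open>\<open>\<sigma>\<close> records the colours fixed on the path from the root, \<open>True\<close> meaning red.\<close>

fun certifies :: "('a list \<Rightarrow> bool) \<Rightarrow> ('a list \<Rightarrow> bool) \<Rightarrow> ('a \<times> bool) list \<Rightarrow> 'a split_tree \<Rightarrow> bool"
  where
  "certifies P Q \<sigma> (Red xs) \<longleftrightarrow> P xs \<and> (\<forall>x\<in>set xs. (x, True) \<in> set \<sigma>)"
| "certifies P Q \<sigma> (Blue xs) \<longleftrightarrow> Q xs \<and> (\<forall>x\<in>set xs. (x, False) \<in> set \<sigma>)"
| "certifies P Q \<sigma> (Split v t u) \<longleftrightarrow>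
     certifies P Q ((v, True) # \<sigma>) t \<and> certifies P Q ((v, False) # \<sigma>) u"

lemma certifies_sound:
  assumes "certifies P Q \<sigma> t" "\<forall>(x, red) \<in> set \<sigma>. x \<in> R \<longleftrightarrow> red"
  shows "(\<exists>xs. P xs \<and> set xs \<subseteq> R) \<or> (\<exists>xs. Q xs \<and> set xs \<inter> R = {})"
  using assms
proof (induction t arbitrary: \<sigma>)
  case (Red xs)
  then have "set xs \<subseteq> R" by auto
  with Red show ?case by auto
next
  case (Blue xs)
  then have "set xs \<inter> R = {}" by auto
  with Blue show ?case by auto
next
  case (Split v t u)
  show ?case
  proof (cases "v \<in> R")
    case True
    then show ?thesis using Split.IH(1)[of "(v, True) # \<sigma>"] Split.prems by auto
  next
    case False
    then show ?thesis using Split.IH(2)[of "(v, False) # \<sigma>"] Split.prems by auto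
  qed
qed

lemma contains_K4_ordered:
  fixes E :: "'a::linorder \<Rightarrow> 'a \<Rightarrow> bool"
  assumes "contains_on E V (complete_V 4) complete_E"
  obtains a b c d where "a < b" "b < c" "c < d"
    and "E a b" "E a c" "E a d" "E b c" "E b d" "E c d"
proof -
  obtain f :: "nat \<Rightarrow> 'a" where inj: "inj_on f {0..<4}"
    and edge: "\<And>u v. u < 4 \<Longrightarrow> v < 4 \<Longrightarrow> u \<noteq> v \<Longrightarrow> E (f u) (f v)"
    using assms by (auto simp: contains_on_def complete_V_def complete_E_def)
  define K where "K = f ` {0..<4}"
  have clique: "E x y" if "x \<in> K" "y \<in> K" "x \<noteq> y" for x y
    using that unfolding K_def by (auto intro!: edge)
  define ys where "ys = sorted_list_of_set K"
  have "finite K" "card K = 4"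
    using inj by (simp_all add: K_def card_image)
  then have ys: "sorted_wrt (<) ys" "set ys = K" "length ys = 4"
    by (simp_all add: ys_def strict_sorted_list_of_set)
  have less: "ys ! i < ys ! j" if "i < j" "j < 4" for i j
    using sorted_wrt_nth_less[OF ys(1) that(1)] that ys(3) by simp
  have edge_ys: "E (ys ! i) (ys ! j)" if "i < j" "j < 4" for i j
    using clique less[OF that] that ys(2,3) by (metis less_trans nth_mem order.strict_implies_not_eq)
  show thesis
    by (rule that[of "ys ! 0" "ys ! 1" "ys ! 2" "ys ! 3"]) (simp_all add: less edge_ys)
qed

definition adj_graph :: "nat list list \<Rightarrow> nat \<Rightarrow> nat \<Rightarrow> bool" where
  "adj_graph A u v \<longleftrightarrow> u < length A \<and> v \<in> set (A ! u)"

lemma simple_graph_adj_graph: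
  assumes "\<forall>u\<in>{..<length A}. \<forall>v\<in>set (A ! u). v < length A \<and> v \<noteq> u \<and> u \<in> set (A ! v)"
  shows "simple_graph {..<length A} (adj_graph A)"
  using assms by (auto simp: simple_graph_def adj_graph_def)

definition common_above :: "nat list list \<Rightarrow> nat \<Rightarrow> nat \<Rightarrow> nat list" where
  "common_above A a b = [c \<leftarrow> A ! a. b < c \<and> c \<in> set (A ! b)]"

lemma adj_graph_K4_free:
  assumes "\<forall>a\<in>{..<length A}. \<forall>b\<in>set (A ! a). a < b \<longrightarrow>
    (\<forall>c\<in>set (common_above A a b). \<forall>d\<in>set (common_above A a b). d \<notin> set (A ! c))"
  shows "Kk_free 4 V (adj_graph A)"
  unfolding Kk_free_def
proof
  assume "contains_on (adj_graph A) V (complete_V 4) complete_E"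
  then obtain a b c d where "a < b" "b < c" "c < d" and "adj_graph A a b" "adj_graph A a c"
    "adj_graph A a d" "adj_graph A b c" "adj_graph A b d" "adj_graph A c d"
    by (rule contains_K4_ordered)
  then have "a \<in> {..<length A}" "b \<in> set (A ! a)" "c \<in> set (common_above A a b)"
    "d \<in> set (common_above A a b)" "d \<in> set (A ! c)"
    by (auto simp: adj_graph_def common_above_def)
  with assms \<open>a < b\<close> show False
    by blast
qed

definition H26_adj :: "nat list list" where
  "H26_adj =
    [[4, 6, 10, 11, 12, 13, 16, 17, 19, 23, 24, 25],
     [2, 4, 6, 8, 10, 11, 13, 15, 17, 19, 21, 23, 24],
     [1, 3, 4, 6, 9, 11, 12, 14, 16, 17, 19, 22, 24, 25],
     [2, 4, 6, 8, 10, 12, 13, 15, 17, 19, 21, 23, 25],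
     [0, 1, 2, 3, 5, 7, 8, 13, 14, 15, 16, 18, 20, 21],
     [4, 6, 8, 9, 11, 12, 14, 16, 17, 19, 21, 22, 24],
     [0, 1, 2, 3, 5, 7, 9, 10, 14, 15, 16, 18, 20, 22, 23],
     [4, 6, 8, 10, 11, 13, 16, 17, 19, 21, 22, 23, 24],
     [1, 3, 4, 5, 7, 9, 11, 17, 18, 20, 22, 23, 24, 25],
     [2, 5, 6, 8, 10, 12, 13, 15, 18, 19, 21, 23, 25],
     [0, 1, 3, 6, 7, 9, 11, 13, 14, 19, 20, 24],
     [0, 1, 2, 5, 7, 8, 10, 12, 14, 15, 18, 20, 21, 25],
     [0, 2, 3, 5, 9, 11, 13, 15, 16, 18, 20, 22, 24],
     [0, 1, 3, 4, 7, 9, 10, 12, 14, 17, 20, 22, 23, 25],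
     [2, 4, 5, 6, 10, 11, 13, 15, 17, 18, 19, 23, 24],
     [1, 3, 4, 6, 9, 11, 12, 14, 16, 17, 19, 22, 24, 25],
     [0, 2, 4, 5, 6, 7, 12, 15, 17, 18, 19, 20, 25],
     [0, 1, 2, 3, 5, 7, 8, 13, 14, 15, 16, 18, 20, 21],
     [4, 6, 8, 9, 11, 12, 14, 16, 17, 19, 21, 22, 24],
     [0, 1, 2, 3, 5, 7, 9, 10, 14, 15, 16, 18, 20, 22, 23],
     [4, 6, 8, 10, 11, 12, 13, 16, 17, 19, 21, 23, 24],
     [1, 3, 4, 5, 7, 9, 11, 17, 18, 20, 22, 23, 24, 25],
     [2, 5, 6, 7, 8, 12, 13, 15, 18, 19, 21, 25],
     [0, 1, 3, 6, 7, 8, 9, 13, 14, 19, 20, 21],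
     [0, 1, 2, 5, 7, 8, 10, 12, 14, 15, 18, 20, 21, 25],
     [0, 2, 3, 8, 9, 11, 13, 15, 16, 21, 22, 24]]"

text \<open>Row lookups are stated as rewrite rules so that evaluation does not walk the list.
  Simp normalises \<open>1\<close> to \<open>Suc 0\<close> (hence \<open>[simplified]\<close>), and the \<open>Suc (Suc 0)\<close> produced by
  \<open>upt_rec\<close> below has to be rewritten back to the numeral \<open>2\<close> by hand.\<close>

lemma H26_adj_nth [simplified, simp]:
  "H26_adj ! 0 = [4, 6, 10, 11, 12, 13, 16, 17, 19, 23, 24, 25]"
  "H26_adj ! 1 = [2, 4, 6, 8, 10, 11, 13, 15, 17, 19, 21, 23, 24]"
  "H26_adj ! 2 = [1, 3, 4, 6, 9, 11, 12, 14, 16, 17, 19, 22, 24, 25]"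
  "H26_adj ! 3 = [2, 4, 6, 8, 10, 12, 13, 15, 17, 19, 21, 23, 25]"
  "H26_adj ! 4 = [0, 1, 2, 3, 5, 7, 8, 13, 14, 15, 16, 18, 20, 21]"
  "H26_adj ! 5 = [4, 6, 8, 9, 11, 12, 14, 16, 17, 19, 21, 22, 24]"
  "H26_adj ! 6 = [0, 1, 2, 3, 5, 7, 9, 10, 14, 15, 16, 18, 20, 22, 23]"
  "H26_adj ! 7 = [4, 6, 8, 10, 11, 13, 16, 17, 19, 21, 22, 23, 24]"
  "H26_adj ! 8 = [1, 3, 4, 5, 7, 9, 11, 17, 18, 20, 22, 23, 24, 25]"
  "H26_adj ! 9 = [2, 5, 6, 8, 10, 12, 13, 15, 18, 19, 21, 23, 25]"
  "H26_adj ! 10 = [0, 1, 3, 6, 7, 9, 11, 13, 14, 19, 20, 24]"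
  "H26_adj ! 11 = [0, 1, 2, 5, 7, 8, 10, 12, 14, 15, 18, 20, 21, 25]"
  "H26_adj ! 12 = [0, 2, 3, 5, 9, 11, 13, 15, 16, 18, 20, 22, 24]"
  "H26_adj ! 13 = [0, 1, 3, 4, 7, 9, 10, 12, 14, 17, 20, 22, 23, 25]"
  "H26_adj ! 14 = [2, 4, 5, 6, 10, 11, 13, 15, 17, 18, 19, 23, 24]"
  "H26_adj ! 15 = [1, 3, 4, 6, 9, 11, 12, 14, 16, 17, 19, 22, 24, 25]"
  "H26_adj ! 16 = [0, 2, 4, 5, 6, 7, 12, 15, 17, 18, 19, 20, 25]"
  "H26_adj ! 17 = [0, 1, 2, 3, 5, 7, 8, 13, 14, 15, 16, 18, 20, 21]"
  "H26_adj ! 18 = [4, 6, 8, 9, 11, 12, 14, 16, 17, 19, 21, 22, 24]"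
  "H26_adj ! 19 = [0, 1, 2, 3, 5, 7, 9, 10, 14, 15, 16, 18, 20, 22, 23]"
  "H26_adj ! 20 = [4, 6, 8, 10, 11, 12, 13, 16, 17, 19, 21, 23, 24]"
  "H26_adj ! 21 = [1, 3, 4, 5, 7, 9, 11, 17, 18, 20, 22, 23, 24, 25]"
  "H26_adj ! 22 = [2, 5, 6, 7, 8, 12, 13, 15, 18, 19, 21, 25]"
  "H26_adj ! 23 = [0, 1, 3, 6, 7, 8, 9, 13, 14, 19, 20, 21]"
  "H26_adj ! 24 = [0, 1, 2, 5, 7, 8, 10, 12, 14, 15, 18, 20, 21, 25]"
  "H26_adj ! 25 = [0, 2, 3, 8, 9, 11, 13, 15, 16, 21, 22, 24]"
  by (simp_all add: H26_adj_def)

lemma length_H26_adj [simp]: "length H26_adj = 26"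
  by (simp add: H26_adj_def)

definition H26 :: "nat \<Rightarrow> nat \<Rightarrow> bool" where
  "H26 = adj_graph H26_adj"

lemma simple_graph_H26: "simple_graph {..<26} H26"
proof -
  have "\<forall>u\<in>{..<length H26_adj}. \<forall>v\<in>set (H26_adj ! u).
      v < length H26_adj \<and> v \<noteq> u \<and> u \<in> set (H26_adj ! v)"
    unfolding length_H26_adj atLeast_upt by (simp add: upt_rec numeral_2_eq_2 [symmetric])
  then show ?thesis
    unfolding H26_def by (metis simple_graph_adj_graph length_H26_adj)
qed

lemma K4_free_H26: "Kk_free 4 V H26"
proof -
  have "\<forall>a\<in>{..<length H26_adj}. \<forall>b\<in>set (H26_adj ! a). a < b \<longrightarrow>
      (\<forall>c\<in>set (common_above H26_adj a b). \<forall>d\<in>set (common_above H26_adj a b).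
         d \<notin> set (H26_adj ! c))"
    unfolding length_H26_adj atLeast_upt
    by (simp add: upt_rec numeral_2_eq_2 [symmetric]) (simp add: common_above_def)
  then show ?thesis
    unfolding H26_def by (rule adj_graph_K4_free)
qed

definition H26_split_tree :: "nat split_tree" where
  "H26_split_tree =
    (Split 6 (Split 16 (Split 2 (Split 7 (Red [6,16,2,7]) (Split 5 (Red [6,16,2,5]) (Split 14 (Red
     [2,6,14,16]) (Split 4 (Red [2,16,4,6]) (Split 18 (Red [6,16,2,18]) (Split 9 (Red
     [2,6,9,16]) (Split 22 (Red [2,6,16,22]) (Split 20 (Red [6,16,2,20]) (Split 12 (Red
     [2,16,6,12]) (Blue [12,5,18,9,22])))))))))) (Split 15 (Split 7 (Red [6,16,7,15]) (Split 1
     (Red [6,15,1,16]) (Split 22 (Red [6,15,16,22]) (Split 12 (Red [15,16,6,12]) (Split 25 (Red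
     [15,16,6,25]) (Split 4 (Red [15,16,4,6]) (Split 0 (Red [6,16,0,15]) (Split 9 (Red
     [6,15,9,16]) (Blue [2,9,22,12,25]))))))))) (Split 19 (Split 20 (Red [16,20,6,19]) (Split 0
     (Red [0,16,6,19]) (Split 18 (Red [16,18,6,19]) (Split 5 (Red [5,16,6,19]) (Split 7 (Red
     [7,16,6,19]) (Split 11 (Split 8 (Split 1 (Split 10 (Red [1,11,8,10]) (Split 23 (Red
     [1,23,6,19]) (Split 25 (Red [8,11,1,25]) (Split 17 (Red [1,8,11,17]) (Split 4 (Red
     [1,8,4,11]) (Split 24 (Red [1,8,11,24]) (Split 21 (Red [1,11,8,21]) (Blue
     [21,4,24,5,7])))))))) (Split 13 (Split 3 (Split 23 (Red [3,23,6,8]) (Split 4 (Red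
     [3,4,8,13]) (Split 17 (Red [3,17,8,13]) (Blue [1,2,15,4,17])))) (Split 17 (Split 4 (Split
     14 (Red [13,14,4,17]) (Split 24 (Split 25 (Red [8,25,11,24]) (Split 22 (Split 12 (Split 9
     (Red [12,13,9,22]) (Blue [25,2,15,3,9])) (Blue [3,2,15,12,25])) (Blue [25,2,15,3,22])))
     (Blue [24,1,14,2,15]))) (Blue [4,1,3,2,15])) (Blue [17,1,3,2,15]))) (Split 4 (Split 17
     (Split 3 (Red [3,8,4,17]) (Split 12 (Split 23 (Split 9 (Red [9,23,6,19]) (Split 14 (Red
     [14,23,6,19]) (Split 24 (Split 25 (Red [8,25,11,24]) (Blue [25,2,13,3,9])) (Blue
     [24,1,14,2,15])))) (Split 10 (Split 14 (Red [10,14,6,11]) (Split 9 (Red [9,10,6,19]) (Split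
     25 (Split 21 (Red [11,25,8,21]) (Blue [23,7,9,13,21])) (Blue [13,3,9,23,25])))) (Blue
     [13,0,3,10,23]))) (Split 22 (Split 25 (Red [8,25,11,22]) (Blue [3,2,15,12,25])) (Blue
     [12,2,13,3,22])))) (Split 3 (Split 23 (Red [3,8,4,23]) (Blue [13,0,1,17,23])) (Blue
     [17,1,3,2,13]))) (Split 21 (Split 25 (Red [11,25,8,21]) (Split 10 (Split 14 (Red
     [10,14,6,11]) (Blue [4,1,14,13,15])) (Blue [13,0,7,4,10]))) (Blue [4,1,7,13,21]))))) (Split
     24 (Split 21 (Split 1 (Red [1,21,11,24]) (Split 25 (Red [21,25,11,24]) (Split 4 (Split 3
     (Split 17 (Red [3,21,4,17]) (Split 23 (Red [3,23,6,21]) (Blue [8,1,7,17,23]))) (Split 17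
     (Split 22 (Split 12 (Split 9 (Split 10 (Red [9,10,6,19]) (Split 23 (Red [9,23,6,19]) (Split
     13 (Red [12,13,9,22]) (Blue [13,0,3,10,23])))) (Blue [25,2,8,3,9])) (Blue [3,2,15,12,25]))
     (Blue [25,2,15,3,22])) (Blue [17,1,3,8,15]))) (Split 13 (Split 17 (Split 3 (Red
     [3,17,13,21]) (Blue [4,1,3,2,8])) (Blue [8,4,17,7,20])) (Blue [4,1,20,8,13]))))) (Split 17
     (Split 4 (Split 22 (Split 23 (Split 1 (Red [1,23,6,19]) (Split 3 (Red [3,23,6,19]) (Split 9
     (Red [9,23,6,19]) (Blue [9,5,18,8,21])))) (Blue [23,7,20,8,21])) (Blue [22,5,18,8,21]))
     (Blue [4,7,18,8,21])) (Blue [17,7,20,8,21]))) (Split 14 (Split 10 (Red [10,14,6,11]) (Blue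
     [24,7,20,8,10])) (Blue [24,5,18,8,14])))) (Split 24 (Split 8 (Split 21 (Split 1 (Red
     [1,24,8,21]) (Split 25 (Red [24,25,8,21]) (Blue [11,1,25,2,15]))) (Split 12 (Split 17
     (Split 1 (Red [1,8,17,24]) (Split 10 (Split 9 (Red [9,10,6,19]) (Blue [21,5,18,9,11]))
     (Blue [11,1,20,10,21]))) (Blue [21,5,20,11,17])) (Blue [11,5,20,12,21]))) (Split 17 (Split
     12 (Split 4 (Split 22 (Split 23 (Split 1 (Red [1,23,6,19]) (Split 3 (Red [3,23,6,19])
     (Split 9 (Red [9,23,6,19]) (Blue [8,5,18,9,11])))) (Blue [8,7,20,11,23])) (Blue
     [8,5,18,11,22])) (Blue [8,4,11,5,20])) (Blue [11,8,12,18,20])) (Blue [8,5,20,11,17])))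
     (Split 12 (Split 25 (Split 21 (Split 14 (Split 10 (Red [10,14,6,19]) (Blue [10,0,7,11,24]))
     (Blue [14,5,18,11,24])) (Blue [21,5,20,11,24])) (Blue [25,0,2,11,24])) (Blue
     [12,5,20,11,24]))))))))) (Split 14 (Split 18 (Red [6,18,14,16]) (Split 5 (Red [5,6,14,16])
     (Split 9 (Split 23 (Red [6,23,9,14]) (Split 10 (Red [6,10,9,14]) (Split 1 (Split 7 (Split 0
     (Red [6,16,0,7]) (Split 4 (Red [7,16,4,6]) (Split 22 (Red [6,7,16,22]) (Split 17 (Red
     [7,16,6,17]) (Split 20 (Red [6,16,7,20]) (Blue [19,0,20,10,23])))))) (Split 13 (Split 17
     (Red [13,17,1,14]) (Split 4 (Red [4,13,1,14]) (Split 3 (Split 12 (Red [12,13,3,9]) (Split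
     25 (Red [13,25,3,9]) (Split 22 (Split 11 (Split 21 (Split 20 (Red [11,21,1,20]) (Blue
     [19,7,20,10,23])) (Blue [21,4,17,7,18])) (Blue [11,2,15,12,25])) (Blue [22,2,15,12,25]))))
     (Blue [3,2,15,4,17])))) (Blue [7,10,23,13,19]))) (Split 3 (Split 0 (Split 12 (Red
     [0,16,6,12]) (Split 25 (Red [0,16,6,25]) (Split 17 (Red [0,16,6,17]) (Blue
     [1,2,15,17,19])))) (Blue [19,0,1,10,23])) (Blue [19,1,3,2,10]))))) (Split 22 (Split 7 (Red
     [6,7,16,22]) (Split 25 (Split 0 (Red [0,16,6,25]) (Split 12 (Split 13 (Red [13,22,12,25])
     (Split 20 (Red [16,20,6,12]) (Split 10 (Split 11 (Red [10,14,6,11]) (Split 3 (Red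
     [6,10,3,14]) (Blue [19,2,15,3,9]))) (Blue [10,0,9,13,19])))) (Blue [9,5,15,12,19]))) (Blue
     [9,2,15,19,25]))) (Blue [19,2,15,9,22]))))) (Split 1 (Split 9 (Split 18 (Red [6,18,9,16])
     (Split 5 (Red [5,6,9,16]) (Split 10 (Red [6,10,1,9]) (Split 23 (Red [6,23,1,9]) (Split 24
     (Split 11 (Split 21 (Red [1,21,11,24]) (Split 8 (Red [1,8,11,24]) (Split 17 (Split 0 (Red
     [0,16,6,17]) (Blue [19,0,14,10,23])) (Blue [14,5,18,17,19])))) (Blue [14,10,15,11,19]))
     (Blue [14,2,10,19,24])))))) (Blue [19,2,15,9,14])) (Blue [19,1,14,2,15])))))) (Split 2
     (Split 14 (Split 10 (Red [6,14,2,10]) (Split 9 (Red [2,6,9,14]) (Split 5 (Red [6,14,2,5])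
     (Split 17 (Red [2,14,6,17]) (Split 19 (Red [2,14,6,19]) (Split 4 (Red [2,14,4,6]) (Split 18
     (Red [6,14,2,18]) (Blue [19,5,18,9,16])))))))) (Split 1 (Split 17 (Red [1,2,6,17]) (Split
     22 (Red [2,6,1,22]) (Split 11 (Red [1,2,6,11]) (Split 10 (Red [1,6,2,10]) (Split 24 (Red
     [1,2,6,24]) (Split 4 (Red [1,2,4,6]) (Split 15 (Red [1,6,2,15]) (Blue
     [15,4,17,14,16])))))))) (Split 3 (Split 4 (Red [2,3,4,6]) (Split 23 (Red [3,6,2,23]) (Split
     19 (Red [2,3,6,19]) (Split 10 (Red [3,6,2,10]) (Blue [19,1,14,10,23]))))) (Split 9 (Split
     10 (Red [6,9,2,10]) (Split 5 (Red [6,9,2,5]) (Split 22 (Red [2,6,9,22]) (Split 19 (Red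
     [2,9,6,19]) (Split 23 (Red [6,9,2,23]) (Blue [19,1,3,10,23])))))) (Split 19 (Split 22 (Red
     [2,22,6,19]) (Split 13 (Split 8 (Split 20 (Split 23 (Red [20,23,6,13]) (Split 4 (Red
     [4,20,8,13]) (Split 17 (Red [17,20,8,13]) (Split 10 (Red [10,20,6,13]) (Split 5 (Split 11
     (Red [8,11,5,20]) (Split 24 (Red [8,24,5,20]) (Blue [10,1,14,11,24]))) (Blue
     [5,4,17,14,16])))))) (Split 7 (Split 17 (Red [7,17,8,13]) (Split 10 (Red [7,10,6,13])
     (Split 23 (Red [7,23,13,19]) (Split 4 (Red [4,7,8,13]) (Split 5 (Split 24 (Red [8,24,5,7])
     (Split 11 (Red [8,11,5,7]) (Blue [10,11,24,14,20]))) (Blue [5,4,17,14,16])))))) (Split 21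
     (Split 11 (Split 25 (Red [11,25,8,21]) (Split 5 (Red [5,11,8,21]) (Split 18 (Red
     [11,18,8,21]) (Split 12 (Split 24 (Red [2,12,11,24]) (Split 0 (Red [0,12,11,13]) (Split 15
     (Red [11,12,2,15]) (Blue [25,0,15,16,24])))) (Blue [12,5,18,16,22]))))) (Split 24 (Split 5
     (Red [5,24,8,21]) (Split 25 (Red [24,25,2,8]) (Split 18 (Red [18,24,8,21]) (Split 12 (Split
     15 (Red [12,24,2,15]) (Split 0 (Red [0,12,13,24]) (Blue [25,0,15,11,16]))) (Blue
     [12,5,18,11,16]))))) (Split 10 (Split 0 (Red [0,10,6,19]) (Split 12 (Split 15 (Split 4
     (Split 5 (Red [4,5,8,21]) (Split 18 (Red [4,18,8,21]) (Blue [14,5,18,11,24]))) (Split 17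
     (Split 5 (Red [5,17,8,21]) (Split 18 (Red [17,18,8,21]) (Blue [14,4,24,5,18]))) (Blue
     [16,0,7,4,17]))) (Blue [15,1,14,11,24])) (Blue [12,0,20,16,24]))) (Blue [10,7,14,11,24]))))
     (Split 4 (Split 17 (Split 0 (Red [0,13,4,17]) (Split 18 (Red [8,18,4,17]) (Split 5 (Red
     [5,8,4,17]) (Blue [21,5,18,9,22])))) (Blue [17,7,20,16,21])) (Blue [4,7,20,16,21])))))
     (Split 21 (Split 20 (Split 23 (Red [20,23,6,13]) (Split 10 (Red [10,20,6,13]) (Split 4 (Red
     [4,20,13,21]) (Blue [8,1,3,4,23])))) (Split 4 (Split 7 (Red [4,7,13,21]) (Split 17 (Split 0
     (Red [0,13,4,17]) (Split 5 (Red [5,21,4,17]) (Split 18 (Red [18,21,4,17]) (Blue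
     [8,5,18,9,22])))) (Blue [17,7,20,8,16]))) (Split 23 (Split 7 (Red [7,23,13,19]) (Blue
     [4,7,20,8,16])) (Blue [8,1,3,4,23])))) (Split 18 (Split 23 (Split 20 (Red [20,23,6,13])
     (Split 7 (Red [7,23,13,19]) (Split 0 (Red [0,23,6,13]) (Split 17 (Split 4 (Split 24 (Split
     12 (Red [12,24,2,18]) (Split 5 (Split 11 (Split 25 (Red [2,25,11,24]) (Blue
     [25,8,21,9,22])) (Blue [12,0,20,11,16])) (Blue [5,9,22,12,21]))) (Blue [24,7,20,8,21]))
     (Blue [7,4,22,8,21])) (Blue [17,7,20,8,21]))))) (Blue [23,1,9,8,21])) (Blue
     [18,8,21,9,22])))) (Split 23 (Split 0 (Red [0,23,6,19]) (Split 20 (Red [20,23,6,19]) (Split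
     7 (Red [7,23,6,19]) (Split 17 (Split 4 (Split 12 (Split 11 (Split 24 (Red [2,12,11,24])
     (Split 15 (Red [11,12,2,15]) (Split 18 (Red [11,12,2,18]) (Split 5 (Red [11,12,2,5]) (Split
     25 (Red [2,11,12,25]) (Blue [25,3,22,13,15])))))) (Split 10 (Split 8 (Split 18 (Red
     [8,18,4,17]) (Split 5 (Red [5,8,4,17]) (Split 21 (Split 24 (Split 25 (Red [2,24,12,25])
     (Split 15 (Red [12,24,2,15]) (Blue [25,3,22,13,15]))) (Blue [14,5,18,11,24])) (Blue
     [21,5,18,9,22])))) (Split 25 (Split 24 (Red [2,24,12,25]) (Blue [8,1,20,11,24])) (Blue
     [8,7,25,11,22]))) (Blue [10,1,20,11,13]))) (Blue [12,0,20,13,16])) (Blue [4,0,7,13,16]))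
     (Blue [17,0,20,13,16]))))) (Split 25 (Split 17 (Split 10 (Split 0 (Red [0,10,6,19]) (Split
     7 (Red [7,10,6,19]) (Split 20 (Red [10,20,6,19]) (Split 21 (Split 11 (Red [11,25,2,21])
     (Split 24 (Red [24,25,2,21]) (Split 8 (Split 5 (Red [5,17,8,21]) (Split 18 (Red
     [17,18,8,21]) (Blue [14,5,18,11,24]))) (Blue [8,1,20,11,23])))) (Blue [7,13,21,22,23])))))
     (Blue [13,3,14,10,23])) (Blue [13,1,14,17,23])) (Blue [13,3,9,23,25]))))) (Split 15 (Split
     22 (Red [6,22,2,15]) (Split 23 (Split 5 (Split 13 (Split 20 (Red [20,23,6,13]) (Split 0
     (Red [0,23,6,13]) (Split 7 (Red [7,23,6,13]) (Split 4 (Split 10 (Split 12 (Split 11 (Red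
     [11,12,2,15]) (Split 24 (Red [12,24,2,5]) (Split 21 (Split 18 (Red [4,21,5,18]) (Blue
     [19,7,18,16,22])) (Blue [21,1,7,11,24])))) (Blue [16,0,20,12,19])) (Blue [19,0,20,10,16]))
     (Blue [16,4,19,7,20]))))) (Split 10 (Split 0 (Red [0,6,10,23]) (Split 7 (Red [6,7,10,23])
     (Split 20 (Red [6,20,10,23]) (Split 4 (Split 17 (Split 21 (Red [5,21,4,17]) (Split 8 (Red
     [5,8,4,17]) (Split 18 (Split 12 (Split 11 (Red [11,12,15,18]) (Blue [11,7,20,8,21])) (Blue
     [16,0,20,12,19])) (Blue [18,8,21,9,22])))) (Blue [17,0,20,13,16])) (Blue
     [16,4,19,7,20]))))) (Blue [10,3,14,13,19]))) (Split 4 (Split 12 (Split 11 (Red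
     [11,12,2,15]) (Split 24 (Red [12,24,2,15]) (Split 17 (Split 21 (Split 7 (Red [7,21,17,23])
     (Blue [19,5,7,16,22])) (Blue [5,11,24,14,21])) (Blue [5,14,16,17,19])))) (Blue
     [5,9,16,12,19])) (Blue [5,4,19,14,16]))) (Split 13 (Split 8 (Split 5 (Split 10 (Split 7
     (Red [7,10,6,13]) (Split 20 (Red [10,20,6,13]) (Blue [19,7,20,16,23]))) (Blue
     [19,1,3,10,23])) (Blue [19,5,23,9,14])) (Blue [23,1,9,8,19])) (Blue [23,3,9,13,19]))))
     (Split 18 (Split 22 (Red [6,22,2,18]) (Split 25 (Split 5 (Split 12 (Split 24 (Red
     [2,24,12,25]) (Blue [15,1,14,19,24])) (Blue [15,9,16,12,19])) (Blue [19,5,15,16,22])) (Blue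
     [15,16,22,19,25]))) (Blue [19,9,16,15,18])))))))) (Split 15 (Split 14 (Split 4 (Red
     [14,15,4,6]) (Split 17 (Red [14,15,6,17]) (Split 22 (Red [6,15,14,22]) (Split 18 (Red
     [6,14,15,18]) (Blue [16,2,18,4,17]))))) (Split 19 (Split 3 (Red [3,15,6,19]) (Split 9 (Red
     [9,15,6,19]) (Split 1 (Red [1,15,6,19]) (Split 22 (Red [15,22,6,19]) (Split 4 (Split 12
     (Split 8 (Split 20 (Split 11 (Red [11,20,8,12]) (Split 13 (Red [4,20,8,13]) (Split 5 (Red
     [4,8,5,20]) (Split 24 (Red [20,24,8,12]) (Blue [2,1,14,11,24]))))) (Split 11 (Split 24 (Red
     [12,15,11,24]) (Split 0 (Red [11,12,0,15]) (Split 18 (Red [11,12,15,18]) (Split 7 (Red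
     [7,8,4,11]) (Split 5 (Red [5,11,8,12]) (Split 25 (Red [11,15,12,25]) (Blue
     [25,0,2,16,24]))))))) (Split 24 (Split 7 (Red [7,8,4,24]) (Split 25 (Red [15,24,12,25])
     (Split 5 (Red [5,24,8,12]) (Split 18 (Red [18,24,8,12]) (Split 0 (Red [12,24,0,15]) (Blue
     [25,0,2,11,16])))))) (Blue [2,1,14,11,24])))) (Split 17 (Split 25 (Split 24 (Red
     [15,24,12,25]) (Split 11 (Red [11,15,12,25]) (Blue [2,1,14,11,24]))) (Blue [25,2,8,3,9]))
     (Blue [17,1,3,2,8]))) (Split 25 (Split 13 (Split 0 (Red [0,13,4,25]) (Split 24 (Split 11
     (Red [15,25,11,24]) (Blue [12,0,2,11,16])) (Blue [12,0,2,16,24]))) (Blue [12,2,13,3,22]))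
     (Blue [2,12,25,16,22]))) (Split 17 (Split 8 (Split 13 (Split 7 (Red [7,17,8,13]) (Split 20
     (Red [17,20,8,13]) (Split 12 (Split 0 (Red [0,13,12,17]) (Split 25 (Split 24 (Red
     [15,24,12,25]) (Blue [2,1,14,4,24])) (Blue [16,0,2,4,25]))) (Blue [16,2,20,4,12])))) (Blue
     [4,1,3,2,13])) (Blue [4,1,3,2,8])) (Blue [2,1,3,4,17]))))))) (Split 4 (Split 1 (Red
     [1,15,4,6]) (Split 3 (Red [3,15,4,6]) (Split 10 (Split 9 (Red [6,9,10,15]) (Split 18 (Split
     22 (Red [6,22,15,18]) (Split 5 (Split 21 (Red [4,21,5,18]) (Split 8 (Red [4,8,5,18]) (Split
     23 (Split 0 (Red [0,6,10,23]) (Split 7 (Red [6,7,10,23]) (Blue [19,2,7,16,22]))) (Blue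
     [23,1,9,8,19])))) (Blue [19,2,5,9,16]))) (Blue [19,2,18,9,16]))) (Blue [19,1,3,2,10]))))
     (Blue [2,4,19,14,16])))) (Split 19 (Split 12 (Split 23 (Split 1 (Red [1,23,6,19]) (Split 3
     (Red [3,23,6,19]) (Split 9 (Red [9,23,6,19]) (Split 0 (Red [0,23,6,19]) (Split 20 (Red
     [20,23,6,19]) (Split 7 (Red [7,23,6,19]) (Split 14 (Red [14,23,6,19]) (Split 24 (Split 4
     (Split 17 (Split 25 (Split 11 (Split 18 (Red [12,18,11,24]) (Split 5 (Red [5,12,11,24])
     (Split 8 (Red [8,25,11,24]) (Split 21 (Red [21,25,11,24]) (Blue [9,5,18,8,21]))))) (Blue
     [11,1,14,2,15])) (Blue [25,2,15,3,16])) (Blue [17,1,16,2,15])) (Blue [4,2,15,3,16])) (Blue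
     [24,1,14,2,15]))))))))) (Split 10 (Split 9 (Red [9,10,6,19]) (Split 3 (Red [3,10,6,19])
     (Split 0 (Red [0,10,6,19]) (Split 7 (Red [7,10,6,19]) (Split 14 (Red [10,14,6,19]) (Split 1
     (Red [1,10,6,19]) (Split 20 (Red [10,20,6,19]) (Split 24 (Split 4 (Split 17 (Split 25
     (Split 11 (Split 18 (Red [12,18,11,24]) (Split 5 (Red [5,12,11,24]) (Split 8 (Red
     [8,25,11,24]) (Split 21 (Red [21,25,11,24]) (Blue [23,1,9,8,21]))))) (Blue [11,1,14,2,15]))
     (Blue [25,2,15,3,16])) (Blue [17,1,16,2,15])) (Blue [4,2,15,3,16])) (Blue
     [24,1,14,2,15]))))))))) (Split 4 (Split 5 (Split 22 (Red [5,22,6,19]) (Split 9 (Red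
     [5,9,6,12]) (Split 14 (Red [5,14,4,19]) (Split 25 (Split 13 (Split 0 (Red [0,13,12,25])
     (Split 20 (Red [13,20,4,12]) (Split 3 (Red [3,13,4,12]) (Split 17 (Split 1 (Red
     [1,13,4,17]) (Split 21 (Red [5,21,4,17]) (Split 8 (Red [5,8,4,17]) (Blue [23,1,9,8,21]))))
     (Blue [17,2,15,3,16]))))) (Blue [13,9,14,10,23])) (Blue [25,2,15,16,22]))))) (Split 18
     (Split 22 (Red [18,22,6,19]) (Split 9 (Red [9,18,6,19]) (Split 14 (Red [14,18,4,6]) (Split
     25 (Split 13 (Split 0 (Red [0,13,12,25]) (Split 20 (Red [13,20,4,12]) (Split 3 (Red
     [3,13,4,12]) (Split 17 (Split 1 (Red [1,13,4,17]) (Split 8 (Red [8,18,4,17]) (Split 21 (Red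
     [18,21,4,17]) (Blue [23,1,9,8,21])))) (Blue [17,2,15,3,16]))))) (Blue [13,9,14,10,23]))
     (Blue [25,2,15,16,22]))))) (Split 17 (Split 13 (Split 0 (Red [0,13,4,17]) (Split 1 (Red
     [1,13,4,17]) (Split 20 (Red [13,20,4,17]) (Split 3 (Red [3,13,4,17]) (Split 14 (Red
     [13,14,4,17]) (Split 7 (Red [7,13,4,17]) (Split 24 (Split 11 (Split 25 (Split 22 (Red
     [13,22,12,25]) (Split 8 (Red [8,25,11,24]) (Split 21 (Red [21,25,11,24]) (Blue
     [23,1,7,8,21])))) (Blue [25,2,15,3,16])) (Blue [11,1,14,2,10])) (Blue
     [24,1,14,2,15])))))))) (Split 8 (Split 20 (Red [8,20,4,17]) (Split 1 (Red [1,8,4,17]) (Blue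
     [13,1,20,10,23]))) (Split 21 (Split 3 (Red [3,21,4,17]) (Split 7 (Red [7,21,4,17]) (Blue
     [23,3,7,8,13]))) (Split 24 (Split 11 (Split 0 (Red [0,12,11,24]) (Split 20 (Red
     [12,20,11,24]) (Blue [13,0,20,10,23]))) (Blue [11,5,18,8,21])) (Blue [24,5,18,8,21])))))
     (Split 14 (Split 8 (Split 1 (Split 11 (Red [1,8,4,11]) (Split 3 (Red [4,8,1,3]) (Blue
     [17,2,15,3,16]))) (Blue [17,1,16,2,15])) (Blue [17,5,18,8,16])) (Blue [17,14,16,15,18])))))
     (Split 3 (Split 14 (Split 18 (Red [14,18,6,19]) (Split 5 (Red [5,14,6,19]) (Split 17 (Split
     13 (Red [13,17,3,14]) (Split 1 (Split 21 (Red [17,21,1,3]) (Blue [4,5,18,16,21])) (Blue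
     [4,1,16,2,15]))) (Blue [16,2,5,4,17])))) (Blue [4,2,15,14,16])) (Blue [4,2,15,3,16])))))
     (Split 3 (Split 23 (Red [3,23,6,19]) (Split 10 (Red [3,10,6,19]) (Split 24 (Split 4 (Split
     25 (Split 8 (Red [3,8,4,25]) (Split 21 (Red [21,25,3,24]) (Split 13 (Red [3,13,4,25])
     (Split 17 (Split 9 (Split 18 (Red [9,18,6,19]) (Split 5 (Red [5,9,6,19]) (Split 22 (Split 7
     (Red [7,22,6,19]) (Split 11 (Split 0 (Red [0,25,11,24]) (Blue [13,0,7,10,23])) (Blue
     [12,5,18,11,16]))) (Blue [22,5,18,8,12])))) (Blue [12,2,15,9,16])) (Blue
     [16,2,15,12,17]))))) (Blue [16,2,15,12,25])) (Blue [16,2,15,4,12])) (Blue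
     [12,2,15,16,24])))) (Blue [12,2,15,3,16]))) (Split 3 (Split 4 (Split 22 (Split 9 (Split 10
     (Red [6,10,3,9]) (Split 18 (Red [6,18,9,22]) (Split 5 (Red [5,6,9,22]) (Split 23 (Red
     [6,23,3,9]) (Split 14 (Split 13 (Red [4,13,3,14]) (Split 7 (Split 21 (Red [7,22,6,21])
     (Split 8 (Red [4,8,3,7]) (Split 12 (Split 17 (Split 24 (Split 20 (Split 0 (Red
     [12,24,0,20]) (Blue [0,10,23,13,19])) (Blue [20,10,23,13,19])) (Blue [24,5,18,8,21])) (Blue
     [16,2,18,17,19])) (Blue [16,12,19,15,18])))) (Blue [7,10,23,13,19]))) (Blue
     [19,14,16,15,18])))))) (Blue [19,2,15,9,16])) (Blue [19,2,15,16,22])) (Blue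
     [16,2,15,4,19])) (Blue [19,2,15,3,16])))))) (Split 19 (Split 16 (Split 2 (Split 20 (Red
     [16,19,2,20]) (Split 12 (Red [2,16,12,19]) (Split 17 (Red [2,16,17,19]) (Split 9 (Red
     [2,19,9,16]) (Split 3 (Red [2,19,3,16]) (Split 14 (Red [2,19,14,16]) (Split 25 (Red
     [2,16,19,25]) (Split 7 (Red [16,19,2,7]) (Split 15 (Red [16,19,2,15]) (Blue
     [15,3,9,12,25])))))))))) (Split 15 (Split 5 (Red [16,19,5,15]) (Split 1 (Red [15,19,1,16])
     (Split 25 (Red [15,16,19,25]) (Split 9 (Red [15,19,9,16]) (Split 22 (Red [15,19,16,22])
     (Blue [2,6,25,9,22])))))) (Split 14 (Split 5 (Red [5,19,14,16]) (Split 18 (Red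
     [18,19,14,16]) (Split 9 (Split 23 (Red [19,23,9,14]) (Split 10 (Red [10,19,9,14]) (Split 1
     (Split 7 (Split 17 (Red [7,16,17,19]) (Split 20 (Red [16,19,7,20]) (Split 4 (Red
     [7,16,4,19]) (Split 0 (Red [16,19,0,7]) (Blue [6,0,20,10,23]))))) (Split 13 (Split 17 (Red
     [13,17,1,14]) (Split 4 (Red [4,13,1,14]) (Split 3 (Split 12 (Red [12,13,3,9]) (Split 25
     (Red [13,25,3,9]) (Split 22 (Split 11 (Split 20 (Split 0 (Red [16,19,0,20]) (Blue
     [6,0,7,10,23])) (Blue [6,7,20,10,23])) (Blue [11,2,15,12,25])) (Blue [22,2,15,12,25]))))
     (Blue [3,2,15,4,17])))) (Blue [7,6,13,10,23]))) (Split 24 (Split 3 (Split 22 (Split 7 (Red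
     [7,19,16,22]) (Blue [6,1,7,10,23])) (Blue [6,1,22,2,15])) (Blue [6,1,3,15,23])) (Blue
     [1,2,10,6,24]))))) (Split 3 (Split 10 (Red [10,19,3,14]) (Split 23 (Red [19,23,3,14])
     (Split 8 (Split 7 (Split 17 (Red [7,16,17,19]) (Split 20 (Red [16,19,7,20]) (Blue
     [6,9,20,10,23]))) (Blue [6,7,9,10,23])) (Blue [9,5,23,6,8])))) (Blue [6,2,15,3,9])))))
     (Split 1 (Split 24 (Split 10 (Red [1,10,19,24]) (Split 9 (Split 18 (Red [18,19,9,16])
     (Split 23 (Red [19,23,1,9]) (Split 5 (Red [5,19,9,16]) (Split 13 (Split 4 (Split 7 (Red
     [4,7,13,16]) (Blue [6,7,14,10,23])) (Blue [14,4,6,15,18])) (Blue [14,6,13,10,23]))))) (Blue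
     [6,9,14,10,15]))) (Blue [14,2,15,6,24])) (Blue [6,1,14,2,15]))))) (Split 2 (Split 14 (Split
     5 (Red [14,19,2,5]) (Split 18 (Red [14,19,2,18]) (Split 15 (Red [14,19,2,15]) (Split 1 (Red
     [2,19,1,14]) (Split 9 (Red [2,19,9,14]) (Blue [6,5,15,9,16])))))) (Split 15 (Split 9 (Red
     [9,19,2,15]) (Split 1 (Red [1,19,2,15]) (Split 3 (Red [3,19,2,15]) (Split 22 (Red
     [19,22,2,15]) (Split 23 (Split 5 (Split 13 (Split 7 (Red [7,23,13,19]) (Split 0 (Red
     [0,23,13,19]) (Split 20 (Red [20,23,13,19]) (Split 10 (Split 17 (Split 18 (Split 8 (Red
     [8,17,5,18]) (Split 21 (Red [17,21,5,18]) (Split 4 (Split 24 (Split 25 (Red [24,25,2,15])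
     (Blue [25,8,21,9,22])) (Blue [24,7,20,8,21])) (Blue [7,4,22,8,21])))) (Blue
     [6,7,18,16,22])) (Blue [16,6,17,7,20])) (Blue [6,0,20,10,16]))))) (Split 10 (Split 0 (Red
     [0,19,10,23]) (Split 20 (Red [19,20,10,23]) (Split 7 (Red [7,19,10,23]) (Split 17 (Split 4
     (Split 21 (Red [5,21,4,17]) (Split 8 (Red [5,8,4,17]) (Split 18 (Split 24 (Split 25 (Red
     [24,25,2,15]) (Blue [25,8,21,9,22])) (Blue [24,7,20,8,21])) (Blue [22,6,21,7,18])))) (Blue
     [4,0,7,13,16])) (Blue [17,0,20,13,16]))))) (Blue [10,3,9,6,13]))) (Split 12 (Split 11 (Red
     [11,12,2,15]) (Split 24 (Red [12,24,2,15]) (Split 8 (Split 7 (Red [7,23,8,19]) (Blue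
     [6,5,7,16,22])) (Blue [5,6,8,9,22])))) (Blue [5,6,12,9,16]))) (Split 18 (Split 8 (Split 10
     (Split 21 (Split 11 (Red [11,18,8,21]) (Split 17 (Red [17,18,8,21]) (Split 4 (Red
     [4,18,8,21]) (Split 24 (Red [18,24,8,21]) (Split 5 (Split 13 (Split 7 (Red [7,10,13,19])
     (Split 0 (Red [0,10,13,19]) (Blue [16,0,7,4,17]))) (Blue [13,1,3,4,17])) (Blue
     [5,4,17,14,16])))))) (Blue [23,1,3,6,21])) (Blue [6,3,9,10,23])) (Blue [23,3,9,6,8])) (Blue
     [6,9,14,18,23]))))))) (Split 4 (Split 1 (Red [1,2,4,19]) (Split 3 (Red [2,3,4,19]) (Split
     23 (Split 9 (Red [9,19,2,23]) (Split 18 (Split 22 (Red [19,22,2,18]) (Split 10 (Split 0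
     (Red [0,19,10,23]) (Split 20 (Red [19,20,10,23]) (Split 7 (Red [7,19,10,23]) (Blue
     [6,7,15,16,22])))) (Blue [6,1,14,10,15]))) (Blue [6,9,14,15,18]))) (Blue [6,1,3,15,23]))))
     (Blue [15,4,6,14,16])))) (Split 15 (Split 14 (Split 5 (Red [14,19,5,15]) (Split 10 (Red
     [14,19,10,15]) (Split 24 (Red [14,15,19,24]) (Split 4 (Red [14,15,4,19]) (Blue
     [16,2,5,4,6]))))) (Split 17 (Split 1 (Red [1,15,17,19]) (Split 3 (Red [3,15,17,19]) (Split
     23 (Split 9 (Red [9,19,15,23]) (Split 4 (Split 25 (Split 22 (Red [15,22,19,25]) (Split 7
     (Split 13 (Red [7,23,13,19]) (Split 21 (Red [7,21,17,23]) (Split 8 (Red [7,8,17,23]) (Split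
     10 (Red [7,19,10,23]) (Blue [10,3,9,6,13]))))) (Blue [6,2,7,16,22]))) (Blue [2,3,16,6,25]))
     (Blue [2,3,14,4,6]))) (Blue [6,2,23,3,14])))) (Blue [2,6,17,14,16]))) (Split 12 (Split 17
     (Split 4 (Split 14 (Split 18 (Red [14,18,17,19]) (Split 5 (Red [5,14,17,19]) (Split 13 (Red
     [13,14,4,17]) (Split 9 (Split 23 (Red [19,23,9,14]) (Split 10 (Red [10,19,9,14]) (Split 7
     (Split 21 (Red [7,21,4,17]) (Split 8 (Red [7,8,4,17]) (Split 24 (Split 22 (Split 11 (Split
     0 (Red [0,12,11,24]) (Blue [0,6,13,10,23])) (Blue [11,5,18,8,21])) (Blue [22,5,18,6,8]))
     (Blue [24,5,18,8,21])))) (Blue [7,6,13,10,23])))) (Blue [6,5,15,9,16]))))) (Blue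
     [6,2,15,14,16])) (Blue [16,2,15,4,6])) (Blue [16,2,15,6,17])) (Blue [16,2,15,6,12])))))
     (Split 2 (Split 16 (Split 12 (Split 24 (Red [2,12,16,24]) (Split 4 (Red [2,16,4,12]) (Split
     22 (Red [2,12,16,22]) (Split 18 (Red [12,16,2,18]) (Split 20 (Red [12,16,2,20]) (Split 25
     (Red [2,16,12,25]) (Split 0 (Red [12,16,0,2]) (Split 3 (Red [2,12,3,16]) (Split 15 (Red
     [12,16,2,15]) (Blue [15,3,22,6,19])))))))))) (Split 4 (Split 15 (Red [4,16,2,15]) (Split 18
     (Red [4,16,2,18]) (Split 3 (Red [2,4,3,16]) (Split 17 (Red [2,16,4,17]) (Split 25 (Red
     [2,16,4,25]) (Split 7 (Red [4,16,2,7]) (Split 14 (Red [2,4,14,16]) (Blue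
     [14,6,19,15,18])))))))) (Split 17 (Split 3 (Red [2,17,3,16]) (Split 15 (Red [16,17,2,15])
     (Split 7 (Red [16,17,2,7]) (Split 20 (Red [16,17,2,20]) (Split 5 (Red [16,17,2,5]) (Split
     14 (Red [2,17,14,16]) (Blue [14,5,15,6,19]))))))) (Split 14 (Split 8 (Split 25 (Split 9
     (Red [9,25,2,8]) (Split 11 (Red [2,25,11,16]) (Split 24 (Red [2,25,16,24]) (Split 3 (Red
     [3,25,2,8]) (Split 15 (Red [16,25,2,15]) (Blue [15,3,9,12,19])))))) (Split 11 (Split 1 (Red
     [2,11,1,14]) (Split 15 (Red [11,14,2,15]) (Split 10 (Red [11,14,2,10]) (Blue
     [1,6,19,10,15])))) (Split 24 (Split 18 (Red [14,24,2,18]) (Split 5 (Red [5,24,8,14]) (Split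
     15 (Red [14,24,2,15]) (Split 1 (Red [1,24,2,8]) (Split 10 (Red [14,24,2,10]) (Blue
     [1,10,15,11,19])))))) (Split 0 (Split 15 (Split 21 (Split 23 (Split 13 (Red [13,23,0,14])
     (Split 1 (Red [1,23,8,21]) (Split 7 (Red [7,23,8,21]) (Blue [13,1,7,4,17])))) (Split 10
     (Split 13 (Red [10,13,0,14]) (Split 3 (Split 7 (Split 22 (Red [7,22,8,21]) (Split 9 (Split
     5 (Red [5,9,8,21]) (Split 18 (Red [9,18,8,21]) (Blue [12,5,18,22,24]))) (Blue
     [13,9,22,12,25]))) (Split 1 (Split 20 (Split 22 (Split 5 (Red [5,22,8,21]) (Split 18 (Red
     [18,22,8,21]) (Blue [12,5,18,11,24]))) (Blue [7,13,19,22,23])) (Blue [23,6,13,7,20])) (Blue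
     [23,1,7,6,19]))) (Split 9 (Split 5 (Red [5,9,8,21]) (Split 18 (Red [9,18,8,21]) (Blue
     [12,5,18,11,24]))) (Blue [23,3,9,13,19])))) (Split 20 (Split 1 (Split 9 (Split 5 (Red
     [5,9,8,21]) (Split 18 (Red [9,18,8,21]) (Blue [12,5,18,11,24]))) (Blue [9,6,19,10,23]))
     (Blue [1,6,19,10,23])) (Blue [20,6,19,10,23])))) (Split 5 (Split 7 (Split 22 (Red
     [8,22,5,7]) (Split 1 (Split 23 (Red [8,23,1,7]) (Split 18 (Split 9 (Red [8,9,5,18]) (Split
     20 (Split 13 (Split 10 (Red [10,13,0,20]) (Blue [9,6,19,10,23])) (Blue [13,9,22,12,25]))
     (Blue [23,9,20,19,21]))) (Blue [21,11,22,18,25]))) (Blue [21,1,25,11,24]))) (Blue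
     [21,7,25,11,24])) (Blue [21,5,25,11,24]))) (Blue [15,11,24,12,25])) (Blue
     [0,11,24,12,25]))))) (Split 21 (Split 1 (Split 11 (Red [2,11,1,14]) (Split 24 (Red
     [2,24,1,14]) (Split 5 (Split 20 (Split 23 (Red [21,23,1,20]) (Split 18 (Split 22 (Red
     [21,22,5,18]) (Split 9 (Red [9,21,5,18]) (Split 7 (Split 3 (Split 25 (Red [3,25,2,21])
     (Split 15 (Split 13 (Split 10 (Red [10,13,1,3]) (Blue [9,6,19,10,23])) (Blue
     [13,9,22,12,25])) (Blue [15,9,11,12,25]))) (Blue [23,3,9,6,8])) (Blue [7,8,19,22,23]))))
     (Blue [18,8,12,11,24]))) (Blue [20,8,12,11,24])) (Blue [5,8,12,11,24])))) (Split 20 (Split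
     15 (Split 11 (Red [11,14,2,15]) (Split 25 (Red [16,25,2,15]) (Split 24 (Red [14,24,2,15])
     (Blue [8,1,25,11,24])))) (Blue [1,4,17,8,15])) (Blue [8,1,20,4,17]))) (Split 1 (Split 11
     (Red [2,11,1,14]) (Split 24 (Red [2,24,1,14]) (Split 7 (Split 20 (Split 5 (Split 18 (Split
     25 (Split 15 (Red [16,25,2,15]) (Split 0 (Red [16,25,0,2]) (Blue [12,0,15,11,24]))) (Blue
     [25,8,21,11,24])) (Blue [18,4,11,8,21])) (Blue [5,8,21,17,24])) (Blue [20,8,21,11,24]))
     (Blue [7,4,24,8,21])))) (Blue [1,4,17,8,21])))) (Split 15 (Split 25 (Red [16,25,2,15])
     (Split 10 (Split 13 (Split 5 (Split 1 (Split 11 (Red [1,11,2,15]) (Split 3 (Red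
     [10,13,1,3]) (Split 9 (Red [10,13,1,9]) (Split 0 (Red [10,13,0,1]) (Split 24 (Red
     [1,24,10,15]) (Blue [0,11,24,12,25])))))) (Split 23 (Split 9 (Red [9,13,10,23]) (Split 7
     (Red [7,13,10,23]) (Split 0 (Red [0,13,10,23]) (Split 3 (Red [3,13,10,23]) (Split 20 (Red
     [13,20,10,23]) (Split 8 (Split 21 (Split 24 (Red [5,24,8,21]) (Split 11 (Red [5,11,8,21])
     (Blue [0,11,24,12,25]))) (Blue [21,1,20,4,17])) (Blue [8,4,17,7,20]))))))) (Blue
     [23,1,14,6,19]))) (Split 18 (Split 22 (Split 7 (Red [7,13,10,22]) (Split 23 (Split 9 (Red
     [9,13,10,23]) (Blue [5,6,19,9,14])) (Blue [14,5,23,6,19]))) (Blue [5,6,19,14,22])) (Blue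
     [14,5,18,17,19]))) (Split 0 (Split 5 (Split 3 (Split 18 (Split 20 (Split 24 (Red
     [10,24,0,20]) (Split 11 (Red [10,11,0,20]) (Split 1 (Split 7 (Split 23 (Split 8 (Red
     [8,23,7,20]) (Split 21 (Red [21,23,1,3]) (Blue [25,8,21,11,24]))) (Split 9 (Split 21 (Red
     [9,21,5,18]) (Split 8 (Red [8,9,5,18]) (Blue [25,8,21,11,24]))) (Blue [23,9,14,13,19])))
     (Blue [13,4,17,7,14])) (Blue [13,1,14,4,17])))) (Blue [13,4,17,14,20])) (Blue
     [14,4,17,13,18])) (Blue [13,3,14,4,17])) (Blue [14,4,17,5,13])) (Blue [13,0,14,4,17])))
     (Split 20 (Split 3 (Split 7 (Split 0 (Split 18 (Split 9 (Split 23 (Split 8 (Red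
     [8,23,7,20]) (Split 13 (Red [13,23,0,9]) (Split 21 (Red [9,21,18,23]) (Split 1 (Split 11
     (Red [1,11,2,15]) (Split 24 (Red [1,24,2,15]) (Blue [25,8,21,11,24]))) (Blue
     [1,4,17,8,21]))))) (Blue [14,6,19,10,23])) (Blue [10,6,19,9,14])) (Blue [14,6,19,10,18]))
     (Blue [10,0,14,6,19])) (Blue [10,6,19,7,14])) (Blue [10,3,14,6,19])) (Blue
     [10,6,19,14,20])))) (Split 5 (Split 18 (Split 3 (Split 25 (Red [2,25,3,16]) (Split 22
     (Split 21 (Red [21,22,5,18]) (Split 8 (Red [8,22,5,18]) (Split 1 (Split 13 (Split 10 (Red
     [10,13,1,3]) (Blue [14,6,19,10,15])) (Blue [14,4,17,13,15])) (Blue [1,4,17,8,21])))) (Blue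
     [15,6,19,14,22]))) (Blue [15,3,14,4,17])) (Blue [14,4,6,15,18])) (Blue
     [14,5,15,6,19]))))))) (Split 15 (Split 5 (Split 14 (Split 17 (Red [14,17,5,15]) (Split 11
     (Red [11,14,2,15]) (Split 24 (Red [14,24,5,15]) (Split 4 (Red [4,14,2,5]) (Split 20 (Split
     7 (Split 13 (Split 10 (Red [10,13,14,20]) (Split 23 (Red [13,23,7,20]) (Split 1 (Split 0
     (Split 12 (Red [12,13,0,20]) (Split 9 (Split 25 (Red [13,25,0,9]) (Split 3 (Split 18 (Split
     21 (Red [9,21,5,18]) (Split 8 (Red [8,9,5,18]) (Blue [25,8,21,11,24]))) (Split 22 (Split 8
     (Red [7,22,8,13]) (Blue [18,4,17,8,16])) (Blue [18,6,12,16,22]))) (Blue [3,6,19,10,23])))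
     (Blue [9,6,19,10,23]))) (Blue [0,6,19,10,23])) (Blue [1,6,19,10,23])))) (Split 0 (Split 8
     (Split 23 (Red [8,23,7,20]) (Split 22 (Red [8,22,5,7]) (Split 18 (Split 9 (Red [8,9,5,18])
     (Split 3 (Split 25 (Red [3,25,2,8]) (Split 12 (Red [3,12,2,15]) (Blue [13,9,22,12,25])))
     (Blue [23,3,9,13,19]))) (Blue [18,6,19,16,22])))) (Split 1 (Split 18 (Split 3 (Split 12
     (Red [3,12,2,15]) (Split 25 (Red [3,25,2,15]) (Split 21 (Split 22 (Red [21,22,5,18]) (Split
     23 (Red [21,23,1,3]) (Split 9 (Red [9,21,5,18]) (Blue [13,9,22,12,25])))) (Blue
     [25,8,21,11,24])))) (Blue [3,4,17,8,13])) (Blue [18,4,17,8,16])) (Blue [1,4,17,8,13])))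
     (Blue [0,4,17,13,16]))) (Split 0 (Split 18 (Split 10 (Split 13 (Red [10,13,0,20]) (Blue
     [7,4,17,13,16])) (Blue [7,6,19,10,16])) (Blue [16,4,17,7,18])) (Blue [16,0,7,4,17])))
     (Split 7 (Split 0 (Split 10 (Split 13 (Red [10,13,7,14]) (Blue [20,4,17,13,16])) (Blue
     [20,6,19,10,16])) (Blue [16,0,20,4,19])) (Blue [16,4,19,7,20]))))))) (Split 18 (Split 12
     (Split 9 (Red [9,12,2,5]) (Split 22 (Red [12,22,2,15]) (Split 11 (Red [11,12,15,18]) (Split
     24 (Red [12,24,2,18]) (Split 3 (Red [3,12,2,15]) (Split 10 (Split 7 (Split 23 (Split 13
     (Red [7,13,10,23]) (Split 8 (Split 20 (Red [8,23,7,20]) (Split 17 (Red [7,8,17,23]) (Split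
     4 (Red [7,8,4,23]) (Blue [13,3,14,4,17])))) (Split 25 (Split 21 (Split 17 (Red
     [7,21,17,23]) (Split 4 (Red [4,21,5,18]) (Blue [13,3,14,4,17]))) (Split 20 (Split 1 (Split
     17 (Red [1,17,2,15]) (Split 4 (Red [1,4,2,15]) (Blue [13,3,14,4,17]))) (Blue
     [1,8,21,11,24])) (Blue [20,8,21,11,24]))) (Blue [25,8,13,9,22])))) (Blue [23,3,14,6,19]))
     (Blue [7,6,19,16,22])) (Blue [10,3,14,6,19]))))))) (Split 8 (Split 24 (Red [8,24,5,18])
     (Split 11 (Red [8,11,5,18]) (Split 9 (Red [8,9,5,18]) (Split 22 (Red [8,22,5,18]) (Split 17
     (Red [8,17,5,18]) (Split 4 (Red [4,8,5,18]) (Split 7 (Split 10 (Split 23 (Split 20 (Red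
     [8,23,7,20]) (Split 3 (Red [8,23,3,7]) (Split 13 (Red [7,23,8,13]) (Blue [13,3,20,4,12]))))
     (Blue [23,6,19,9,14])) (Blue [10,6,19,9,14])) (Blue [7,6,19,16,22])))))))) (Split 23 (Split
     21 (Split 11 (Red [11,21,5,18]) (Split 4 (Red [4,21,5,18]) (Split 22 (Red [21,22,5,18])
     (Split 9 (Red [9,21,18,23]) (Split 24 (Red [21,24,5,18]) (Split 17 (Red [17,21,5,18])
     (Split 7 (Split 13 (Red [7,23,13,21]) (Split 3 (Red [21,23,3,7]) (Blue [13,3,14,4,17])))
     (Blue [7,4,17,8,16])))))))) (Split 10 (Split 13 (Split 9 (Red [9,13,10,23]) (Split 7 (Red
     [7,13,10,23]) (Split 1 (Red [1,13,10,23]) (Split 0 (Red [0,13,10,23]) (Blue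
     [16,0,7,6,19]))))) (Split 20 (Split 25 (Split 24 (Red [24,25,2,15]) (Split 9 (Red
     [9,25,2,15]) (Split 11 (Red [11,25,2,15]) (Split 3 (Red [3,25,2,15]) (Split 22 (Red
     [22,25,2,15]) (Split 7 (Split 1 (Split 17 (Red [1,17,2,15]) (Split 4 (Red [1,4,2,15]) (Blue
     [13,3,14,4,17]))) (Blue [1,8,21,11,24])) (Blue [7,6,19,16,22]))))))) (Split 0 (Split 24
     (Red [10,24,0,20]) (Split 11 (Red [10,11,0,20]) (Blue [25,8,21,11,24]))) (Blue
     [0,12,25,13,16]))) (Split 0 (Split 7 (Split 24 (Red [10,24,0,7]) (Split 11 (Red
     [10,11,0,7]) (Blue [20,8,21,11,24]))) (Blue [16,6,19,7,20])) (Blue [16,0,20,12,19]))))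
     (Split 20 (Split 3 (Split 4 (Red [3,4,2,15]) (Split 13 (Red [13,23,3,20]) (Split 17 (Red
     [3,17,2,15]) (Split 25 (Red [3,25,2,15]) (Split 0 (Split 1 (Split 11 (Red [1,11,2,15])
     (Split 24 (Red [1,24,2,15]) (Blue [25,8,21,11,24]))) (Blue [1,4,17,8,21])) (Blue
     [13,0,14,4,17])))))) (Blue [10,3,14,6,19])) (Blue [10,6,19,14,20])))) (Split 20 (Split 0
     (Split 1 (Split 11 (Red [1,11,2,15]) (Split 17 (Red [1,17,2,15]) (Split 24 (Red
     [1,24,2,15]) (Split 4 (Red [1,4,2,15]) (Split 7 (Split 3 (Split 25 (Red [3,25,2,15]) (Split
     10 (Split 13 (Red [10,13,1,3]) (Split 9 (Split 21 (Red [9,21,5,18]) (Blue [25,8,21,11,24]))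
     (Blue [23,9,14,13,19]))) (Blue [14,6,19,10,23]))) (Blue [23,3,14,6,19])) (Blue
     [7,4,17,8,16])))))) (Blue [23,1,14,6,19])) (Blue [23,0,14,6,19])) (Blue
     [20,6,19,16,23]))))) (Blue [18,6,19,14,16]))) (Split 7 (Split 18 (Split 14 (Split 17 (Red
     [14,17,2,15]) (Split 11 (Red [11,14,2,15]) (Split 24 (Red [14,24,2,18]) (Split 4 (Red
     [4,14,2,15]) (Split 0 (Split 20 (Split 8 (Split 23 (Red [8,23,7,20]) (Split 22 (Red
     [8,22,7,18]) (Blue [5,6,19,16,22]))) (Blue [5,4,17,8,16])) (Blue [16,5,20,17,19])) (Blue
     [16,0,5,4,19])))))) (Blue [5,6,19,14,16])) (Blue [16,5,18,6,19])) (Blue [16,5,7,6,19])))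
     (Split 9 (Split 0 (Split 22 (Split 25 (Red [2,25,9,22]) (Split 12 (Red [2,12,9,22]) (Split
     18 (Split 8 (Red [8,18,9,22]) (Split 21 (Red [18,21,9,22]) (Split 3 (Split 20 (Split 14
     (Split 24 (Red [14,24,2,18]) (Blue [15,12,25,16,24])) (Blue [15,6,19,14,16])) (Blue
     [16,6,19,15,20])) (Blue [15,3,16,12,19])))) (Blue [16,12,19,15,18])))) (Blue
     [15,6,19,16,22])) (Blue [16,0,15,6,19])) (Blue [15,6,19,9,16])))) (Split 16 (Split 14
     (Split 15 (Split 4 (Red [4,15,14,16]) (Split 17 (Red [15,17,14,16]) (Split 1 (Split 24 (Red
     [15,24,1,14]) (Split 11 (Red [11,15,1,14]) (Split 8 (Split 9 (Split 23 (Red [8,23,1,9])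
     (Split 25 (Red [15,25,9,16]) (Split 12 (Red [12,15,9,16]) (Blue [2,11,24,12,25])))) (Split
     5 (Split 12 (Red [12,16,5,15]) (Split 22 (Split 21 (Red [5,22,8,21]) (Split 7 (Red
     [8,22,5,7]) (Split 25 (Red [22,25,8,15]) (Blue [25,2,21,9,11])))) (Blue [2,6,12,9,22])))
     (Blue [9,2,5,6,19]))) (Split 25 (Split 9 (Red [15,25,9,16]) (Split 3 (Red [15,25,3,16])
     (Blue [2,3,9,6,19]))) (Blue [25,2,8,11,24]))))) (Split 3 (Split 25 (Red [15,25,3,16])
     (Split 12 (Red [12,15,3,16]) (Split 23 (Split 13 (Red [13,23,3,14]) (Blue [1,2,13,4,17]))
     (Blue [1,2,23,6,19])))) (Blue [2,1,3,4,17]))))) (Split 22 (Split 9 (Split 1 (Split 3 (Split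
     13 (Split 23 (Red [13,23,3,9]) (Split 17 (Red [13,17,3,14]) (Split 10 (Red [10,13,9,14])
     (Split 12 (Red [12,13,3,9]) (Split 4 (Red [4,13,1,14]) (Split 25 (Red [13,25,3,22]) (Split
     11 (Split 20 (Split 21 (Red [11,21,1,20]) (Split 8 (Red [8,11,1,20]) (Split 18 (Split 24
     (Red [14,18,11,24]) (Blue [24,2,15,12,25])) (Blue [18,4,17,8,21])))) (Blue
     [20,6,19,10,23])) (Blue [11,2,15,12,25])))))))) (Split 8 (Split 23 (Red [8,23,1,9]) (Split
     25 (Red [8,25,9,22]) (Split 18 (Red [8,18,9,22]) (Split 17 (Red [8,17,1,3]) (Split 4 (Red
     [4,8,1,3]) (Split 5 (Red [5,8,9,22]) (Split 21 (Split 7 (Red [7,22,8,21]) (Split 24 (Red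
     [1,24,8,21]) (Split 11 (Red [1,11,8,21]) (Blue [25,2,15,11,24])))) (Blue
     [21,4,17,5,18])))))))) (Split 21 (Split 23 (Red [21,23,1,9]) (Split 25 (Red [21,25,3,9])
     (Split 17 (Red [17,21,1,3]) (Split 4 (Red [4,21,1,3]) (Split 5 (Red [5,21,9,22]) (Split 18
     (Red [18,21,9,22]) (Blue [8,4,17,5,18]))))))) (Split 20 (Split 12 (Split 11 (Red
     [12,20,11,16]) (Split 18 (Red [12,18,9,16]) (Split 5 (Red [5,12,9,22]) (Blue
     [11,5,18,8,21])))) (Split 11 (Split 10 (Red [10,11,14,20]) (Split 7 (Split 17 (Red
     [16,17,7,20]) (Split 4 (Red [4,16,7,20]) (Split 18 (Split 24 (Red [14,18,11,24]) (Split 5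
     (Red [11,14,5,18]) (Blue [5,8,21,17,24]))) (Blue [18,4,17,8,21])))) (Split 23 (Split 0
     (Split 17 (Red [16,17,0,20]) (Split 4 (Red [4,16,0,20]) (Blue [7,4,17,13,21]))) (Blue
     [10,0,7,6,19])) (Blue [7,10,23,13,19])))) (Split 25 (Split 24 (Split 10 (Red [10,24,1,14])
     (Split 0 (Red [0,25,16,24]) (Blue [0,10,12,11,13]))) (Blue [12,2,15,11,24])) (Blue
     [11,2,15,12,25])))) (Split 7 (Split 11 (Split 10 (Red [10,11,7,14]) (Split 23 (Split 0
     (Split 17 (Red [16,17,0,7]) (Split 4 (Red [4,16,0,7]) (Blue [20,4,17,13,21]))) (Blue
     [10,0,20,6,13])) (Blue [20,6,19,10,23]))) (Split 24 (Split 10 (Red [10,24,1,7]) (Split 0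
     (Split 17 (Red [16,17,0,7]) (Blue [20,8,21,11,17])) (Blue [10,0,20,11,13]))) (Blue
     [20,8,21,11,24]))) (Split 23 (Split 17 (Split 18 (Red [17,18,14,16]) (Split 5 (Red
     [5,17,14,16]) (Split 24 (Split 10 (Red [10,24,1,14]) (Blue [10,6,13,7,20])) (Blue
     [24,5,18,8,21])))) (Blue [17,7,20,8,21])) (Blue [23,6,8,7,20]))))))) (Blue [3,2,15,6,19]))
     (Blue [1,2,15,6,19])) (Blue [9,2,15,6,19])) (Blue [22,2,15,6,19]))) (Split 5 (Split 22
     (Split 12 (Red [5,12,16,22]) (Split 10 (Split 15 (Split 17 (Red [16,17,5,15]) (Split 4 (Red
     [4,16,5,15]) (Split 25 (Red [15,25,16,22]) (Split 3 (Split 18 (Split 21 (Red [21,22,5,18])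
     (Split 8 (Red [8,22,5,18]) (Split 1 (Split 13 (Red [10,13,1,3]) (Blue [14,2,13,4,17]))
     (Blue [2,1,14,6,17])))) (Blue [14,2,18,6,17])) (Blue [2,3,14,4,19]))))) (Blue
     [14,2,15,6,19])) (Blue [14,2,10,6,19]))) (Blue [2,6,19,14,22])) (Blue [14,2,5,6,19])))
     (Split 14 (Split 7 (Split 9 (Split 3 (Split 15 (Split 17 (Red [15,17,3,14]) (Split 12 (Red
     [12,15,3,9]) (Split 4 (Red [4,15,3,14]) (Split 25 (Red [15,25,3,9]) (Split 22 (Split 0
     (Split 20 (Split 18 (Split 8 (Red [8,22,7,18]) (Split 21 (Red [21,22,7,18]) (Split 24 (Red
     [14,24,15,18]) (Blue [2,12,25,16,24])))) (Blue [16,2,18,4,19])) (Blue [16,2,20,4,12]))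
     (Blue [16,0,2,4,6])) (Blue [2,12,25,16,22])))))) (Blue [16,2,15,6,19])) (Blue
     [2,3,16,6,19])) (Blue [2,6,19,9,16])) (Blue [16,2,7,6,19])) (Blue [2,6,19,14,16]))))))"

lemma certifies_H26_split_tree:
  "certifies (K112_witness H26) (K122_witness H26) [] H26_split_tree"
  by (simp add: H26_split_tree_def H26_def adj_graph_def)

theorem mainTheorem13:
  shows "\<exists>(V :: nat set) E. simple_graph V E \<and> card V = 26 \<and> Kk_free 4 V E \<and>
     (\<forall>R B. R \<union> B = V \<and> R \<inter> B = {} \<longrightarrow>
        contains_on E R (tripartite_V 1 1 2) (tripartite_E 1 1 2) \<or>
        contains_on E B (tripartite_V 1 2 2) (tripartite_E 1 2 2))"
proof (intro exI conjI allI impI)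
  show "simple_graph {..<26} H26" "card {..<26::nat} = 26" "Kk_free 4 {..<26} H26"
    by (simp_all add: simple_graph_H26 K4_free_H26)
  have symp: "symp H26"
    using simple_graph_H26 by (rule simple_graph_symp)
  fix R B :: "nat set" assume partition: "R \<union> B = {..<26} \<and> R \<inter> B = {}"
  consider xs where "K112_witness H26 xs" "set xs \<subseteq> R"
    | xs where "K122_witness H26 xs" "set xs \<inter> R = {}"
    using certifies_sound[OF certifies_H26_split_tree, of R] by auto
  then show "contains_on H26 R (tripartite_V 1 1 2) (tripartite_E 1 1 2) \<or>
      contains_on H26 B (tripartite_V 1 2 2) (tripartite_E 1 2 2)"
  proof cases
    case 1
    then show ?thesis using contains_on_K112[OF symp] by blast
  next
    case 2
    then have "set xs \<subseteq> B"
      using set_K122_witness_subset[OF simple_graph_H26] partition by blast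
    then show ?thesis using 2 contains_on_K122[OF symp] by blast
  qed
qed

end
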